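(* Let $d\ge3$, $\lambda>0$, $x\in\mathbb{S}^{N-1}$, $\mathcal{W}$ from the Gaussian orthogonal tensor ensemble on $\mathcal{S}^d(N)$, and $\mathcal{Y}=\lambda x^{\otimes d}+\frac1{\sqrt N}\mathcal{W}$. Let $(\mu,u)=(\mu(\mathcal{W}),u(\mathcal{W}))$ be an almost everywhere continuously differentiable choice of eigenpair of $\mathcal{Y}$ such that almost surely $\mu\neq0$ and $\mu/(d-1)$ is not an eigenvalue of $\mathcal{Y}\cdot u^{d-2}$, and such that all expectations below are finite and Gaussian integration by parts applies. Then, with $\bar R=\left(\mathcal{Y}\cdot u^{d-2}-\frac{\mu}{d-1}I\right)^{-1}$, $$\mathbb{E}[\mu]=\lambda\,\mathbb{E}\big[\langle x,u\rangle^d\big]+\frac{1}{(d-2)N}\mathbb{E}\Big[\frac1\mu\Big]-\frac{1}{(d-1)N}\mathbb{E}\big[\operatorname{tr}\bar R\big].$$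
   Context: $\mathcal{S}^d(N)$ is the space of real symmetric $d$-th order $N\times\cdots\times N$ tensors; $\mathcal{Y}\cdot u^p$ is the $p$-fold contraction $(\mathcal{Y}\cdot u^p)_{i_{p+1}\dots i_d}=\sum_{i_1,\dots,i_p}Y_{i_1\dots i_d}u_{i_1}\cdots u_{i_p}$; an eigenpair $(\mu,u)$ satisfies $\mathcal{Y}\cdot u^{d-1}=\mu u$, $\|u\|=1$. The Gaussian orthogonal tensor ensemble has density proportional to $e^{-\frac12\|\mathcal{W}\|_F^2}$; equivalently the entries $W_{i_1\dots i_d}$, $i_1\le\dots\le i_d$, are independent centered Gaussians with variance equal to the reciprocal of the number of distinct permutations of $(i_1,\dots,i_d)$. *)

theory Defs
  imports "HOL-Probability.Probability" "HOL-Library.Multiset"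
begin

text \<open>Coordinates are indexed by a finite type 'n, so N = CARD('n).
  A d-th order tensor is a function on index lists (only lists of length d matter).
  The Gaussian orthogonal tensor ensemble is parametrised by its independent entries
  W_{i_1..i_d}, i_1 \<le> ... \<le> i_d, i.e. by a function on multisets of size d.\<close>

definition idx_set :: "nat \<Rightarrow> 'n multiset set" where
  "idx_set d = {m. size m = d}"

definition perm_count :: "'n multiset \<Rightarrow> nat" where
  "perm_count m = card {xs. mset xs = m}"

definition gote :: "nat \<Rightarrow> ('n::finite multiset \<Rightarrow> real) measure" where
  "gote d = PiM (idx_set d)
     (\<lambda>m. density lborel (normal_density 0 (sqrt (1 / real (perm_count m)))))"

definition tensor_of :: "('n multiset \<Rightarrow> real) \<Rightarrow> ('n list \<Rightarrow> real)" where
  "tensor_of g = (\<lambda>is. g (mset is))"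

definition tensor_pow :: "real^'n \<Rightarrow> ('n list \<Rightarrow> real)" where
  "tensor_pow x = (\<lambda>is. prod_list (map (\<lambda>i. x $ i) is))"

definition contract :: "('n::finite list \<Rightarrow> real) \<Rightarrow> real^'n \<Rightarrow> nat \<Rightarrow> ('n list \<Rightarrow> real)" where
  "contract Y u p = (\<lambda>js. \<Sum>is\<in>{is. length is = p}. Y (is @ js) * prod_list (map (\<lambda>i. u $ i) is))"

definition contract_vec :: "('n::finite list \<Rightarrow> real) \<Rightarrow> real^'n \<Rightarrow> nat \<Rightarrow> real^'n" where
  "contract_vec Y u p = (\<chi> j. contract Y u p [j])"

definition contract_mat :: "('n::finite list \<Rightarrow> real) \<Rightarrow> real^'n \<Rightarrow> nat \<Rightarrow> real^'n^'n" where
  "contract_mat Y u p = (\<chi> i j. contract Y u p [i, j])"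

definition is_eigenpair :: "nat \<Rightarrow> ('n::finite list \<Rightarrow> real) \<Rightarrow> real \<Rightarrow> real^'n \<Rightarrow> bool" where
  "is_eigenpair d Y \<mu> u \<longleftrightarrow> contract_vec Y u (d - 1) = \<mu> *\<^sub>R u \<and> norm u = 1"

definition has_eigenvalue :: "real^'n^'n \<Rightarrow> real \<Rightarrow> bool" where
  "has_eigenvalue A c \<longleftrightarrow> (\<exists>v. v \<noteq> 0 \<and> A *v v = c *\<^sub>R v)"

definition spiked :: "real \<Rightarrow> real^'n::finite \<Rightarrow> ('n multiset \<Rightarrow> real) \<Rightarrow> ('n list \<Rightarrow> real)" where
  "spiked lam x g = (\<lambda>is. lam * tensor_pow x is + tensor_of g is / sqrt (real CARD('n)))"

definition partial :: "(('a \<Rightarrow> real) \<Rightarrow> real) \<Rightarrow> 'a \<Rightarrow> ('a \<Rightarrow> real) \<Rightarrow> real" where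
  "partial F m g = deriv (\<lambda>t. F (g(m := t))) (g m)"

definition C1_at :: "'a set \<Rightarrow> (('a \<Rightarrow> real) \<Rightarrow> real) \<Rightarrow> ('a \<Rightarrow> real) \<Rightarrow> bool" where
  "C1_at S F g \<longleftrightarrow> (\<exists>U. openin (top_of_set (PiE S (\<lambda>_. UNIV))) U \<and> g \<in> U \<and>
      (\<forall>h\<in>U. \<forall>m\<in>S. (\<lambda>t. F (h(m := t))) differentiable (at (h m))) \<and>
      (\<forall>m\<in>S. continuous_on U (partial F m)))"

end

(* Since Y is symmetric, mu = Y.u^d = lam <x,u>^d + N^(-1/2) sum_is W_is u_is, and Gaussian
   integration by parts in each free entry W_m (variance 1/#perm(m)) replaces W_m by a derivative
   of the monomial u_is.  Differentiating the eigen-equation along W_m gives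
     N^(-1/2) E_m.u^(d-1) + (d-1) (Y.u^(d-2)) du = (dmu) u + mu du,   <u, du> = 0,
   where E_m is the indicator tensor of the index multiset m; it is solved with the resolvent Rbar,
   on which u is an eigenvector with eigenvalue (d-1)/((d-2) mu).  The sum over the entries is then
   evaluated with
     sum_m <a, E_m.u^(d-1)> <b, E_m.u^(d-1)> / #perm(m) = (<a,b> + (d-1) <a,u> <b,u>) / d,
   which yields the trace of Rbar and the term 1/mu. *)

theory Submission
  imports Defs "HOL-Combinatorics.Multiset_Permutations"
begin

section \<open>Contractions over index lists\<close>

definition index_lists :: "nat \<Rightarrow> 'n list set" where
  "index_lists n = {is. length is = n}"

definition symmetric_tensor :: "('n list \<Rightarrow> real) \<Rightarrow> bool" where
  "symmetric_tensor T \<longleftrightarrow> (\<forall>is js. mset is = mset js \<longrightarrow> T is = T js)"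

lemma finite_index_lists: "finite (index_lists n :: 'n::finite list set)"
  using finite_lists_length_eq[of "UNIV :: 'n set" n] by (simp add: index_lists_def)

lemma index_lists_0: "index_lists 0 = {[]}"
  by (auto simp: index_lists_def)

lemma index_lists_Suc: "index_lists (Suc n) = (\<lambda>(is, k). is @ [k]) ` (index_lists n \<times> UNIV)"
proof (intro set_eqI iffI)
  fix xs assume "xs \<in> index_lists (Suc n)"
  then have "xs = butlast xs @ [last xs]" "butlast xs \<in> index_lists n"
    by (auto simp: index_lists_def intro!: append_butlast_last_id[symmetric])
  then show "xs \<in> (\<lambda>(is, k). is @ [k]) ` (index_lists n \<times> UNIV)"
    by (metis (no_types, lifting) SigmaI UNIV_I case_prod_conv image_eqI)
qed (auto simp: index_lists_def)

lemma sum_index_lists_Suc: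
  fixes f :: "'n::finite list \<Rightarrow> real"
  shows "sum f (index_lists (Suc n)) = (\<Sum>k\<in>UNIV. \<Sum>is\<in>index_lists n. f (is @ [k]))"
proof -
  have "inj_on (\<lambda>(is, k). is @ [k]) (index_lists n \<times> (UNIV :: 'n set))"
    by (auto simp: inj_on_def)
  then have "sum f (index_lists (Suc n)) = (\<Sum>(is, k)\<in>index_lists n \<times> UNIV. f (is @ [k]))"
    unfolding index_lists_Suc by (simp add: sum.reindex split_def comp_def)
  also have "\<dots> = (\<Sum>k\<in>UNIV. \<Sum>is\<in>index_lists n. f (is @ [k]))"
    by (simp add: sum.cartesian_product[symmetric] sum.swap[of _ "index_lists n"])
  finally show ?thesis .
qed

lemma sum_index_lists_prod_list:
  fixes f :: "'n::finite \<Rightarrow> real"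
  shows "(\<Sum>is\<in>index_lists n. prod_list (map f is)) = (\<Sum>i\<in>UNIV. f i) ^ n"
proof (induction n)
  case 0
  show ?case by (simp add: index_lists_0)
next
  case (Suc n)
  have "(\<Sum>is\<in>index_lists (Suc n). prod_list (map f is))
      = (\<Sum>k\<in>UNIV. \<Sum>is\<in>index_lists n. f k * prod_list (map f is))"
    unfolding sum_index_lists_Suc by (simp add: mult.commute)
  also have "\<dots> = (\<Sum>k\<in>UNIV. f k) * (\<Sum>is\<in>index_lists n. prod_list (map f is))"
    by (simp add: sum_product)
  finally show ?case by (simp add: Suc.IH)
qed

lemma prod_list_map_mult:
  "prod_list (map (\<lambda>i. f i * g i) xs) = prod_list (map f xs) * (prod_list (map g xs) :: 'a::comm_monoid_mult)"
  by (induction xs) (simp_all add: mult_ac)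

lemma contract_eq_sum_index_lists:
  "contract Y u p js = (\<Sum>is\<in>index_lists p. Y (is @ js) * prod_list (map (\<lambda>i. u $ i) is))"
  by (simp add: contract_def index_lists_def)

lemma contract_0: "contract Y u 0 js = Y js"
  by (simp add: contract_eq_sum_index_lists index_lists_0)

lemma contract_Suc: "contract Y u (Suc p) js = (\<Sum>k\<in>UNIV. u $ k * contract Y u p (k # js))"
  unfolding contract_eq_sum_index_lists sum_index_lists_Suc
  by (simp add: sum_distrib_left algebra_simps)

lemma contract_cmult: "contract (\<lambda>is. c * T is) u p js = c * contract T u p js"
  unfolding contract_eq_sum_index_lists by (simp add: sum_distrib_left mult.assoc)

lemma contract_zero: "contract (\<lambda>is. 0) u p js = 0"
  unfolding contract_eq_sum_index_lists by simp

lemma contract_cong_mset: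
  assumes "symmetric_tensor Y" "mset js = mset js'"
  shows "contract Y u p js = contract Y u p js'"
  unfolding contract_eq_sum_index_lists using assms
  by (auto simp: symmetric_tensor_def intro!: sum.cong)

lemma contract_Suc_swap:
  assumes "symmetric_tensor Y"
  shows "(\<Sum>k\<in>UNIV. u $ k * contract Y u p (l # k # js)) = contract Y u (Suc p) (l # js)"
  unfolding contract_Suc using contract_cong_mset[OF assms, of "l # _ # js" "_ # l # js"] by simp

text \<open>The \<open>p\<close> copies of the vector contribute equally because the tensor is symmetric.\<close>

lemma has_real_derivative_contract:
  fixes Yt :: "real \<Rightarrow> 'n::finite list \<Rightarrow> real" and w :: "real \<Rightarrow> real^'n"
  assumes Y: "\<And>is. ((\<lambda>t. Yt t is) has_real_derivative Y' is) (at t0)"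
    and w: "\<And>i. ((\<lambda>t. w t $ i) has_real_derivative v $ i) (at t0)"
    and sym: "symmetric_tensor (Yt t0)"
  shows "((\<lambda>t. contract (Yt t) (w t) p js) has_real_derivative
           contract Y' (w t0) p js
           + real p * (\<Sum>k\<in>UNIV. v $ k * contract (Yt t0) (w t0) (p - 1) (k # js))) (at t0)"
proof (induction p arbitrary: js)
  case 0
  show ?case by (simp add: contract_0 Y)
next
  case (Suc p)
  let ?C = "\<lambda>q js. contract (Yt t0) (w t0) q js" and ?u = "w t0"
  have "((\<lambda>t. contract (Yt t) (w t) (Suc p) js) has_real_derivative
     (\<Sum>k\<in>UNIV. v $ k * ?C p (k # js) + (contract Y' ?u p (k # js)
        + real p * (\<Sum>l\<in>UNIV. v $ l * ?C (p - 1) (l # k # js))) * ?u $ k)) (at t0)"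
    unfolding contract_Suc by (intro DERIV_sum DERIV_mult w Suc.IH)
  moreover have "(\<Sum>k\<in>UNIV. (\<Sum>l\<in>UNIV. v $ l * ?C (p - 1) (l # k # js)) * ?u $ k)
      = (\<Sum>l\<in>UNIV. v $ l * ?C p (l # js))" if "p > 0"
  proof -
    have "(\<Sum>k\<in>UNIV. (\<Sum>l\<in>UNIV. v $ l * ?C (p - 1) (l # k # js)) * ?u $ k)
        = (\<Sum>l\<in>UNIV. v $ l * (\<Sum>k\<in>UNIV. ?u $ k * ?C (p - 1) (l # k # js)))"
      unfolding sum_distrib_left sum_distrib_right by (subst sum.swap) (simp add: mult_ac)
    with that show ?thesis by (simp add: contract_Suc_swap[OF sym])
  qed
  ultimately show ?case
    by (cases "p = 0")
       (simp_all add: contract_Suc sum.distrib distrib_right sum_distrib_left[symmetric]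
          mult.commute mult.left_commute algebra_simps)
qed

section \<open>Tensors indexed by multisets\<close>

definition entry_tensor :: "'n multiset \<Rightarrow> 'n list \<Rightarrow> real" where
  "entry_tensor m is = (if mset is = m then 1 else 0)"

definition mset_monomial :: "real^'n \<Rightarrow> 'n multiset \<Rightarrow> real" where
  "mset_monomial w m = (\<Prod>i\<in>#m. w $ i)"

lemma symmetric_entry_tensor: "symmetric_tensor (entry_tensor m)"
  by (simp add: symmetric_tensor_def entry_tensor_def)

lemma prod_list_eq_mset_monomial: "prod_list (map (\<lambda>i. w $ i) is) = mset_monomial w (mset is)"
  by (simp add: mset_monomial_def prod_mset_prod_list[symmetric])

lemma perm_count_eq_card: "perm_count m = card (permutations_of_multiset m)"
  by (simp add: perm_count_def permutations_of_multiset_def)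

lemma perm_count_pos: "perm_count m > 0"
  by (simp add: perm_count_eq_card card_gt_0_iff)

lemma idx_set_eq_image_mset: "idx_set d = mset ` index_lists d"
  by (auto simp: idx_set_def index_lists_def image_iff) (metis ex_mset size_mset)

lemma finite_idx_set: "finite (idx_set d :: 'n::finite multiset set)"
  by (simp add: idx_set_eq_image_mset finite_index_lists)

lemma mset_in_idx_set: "is \<in> index_lists d \<Longrightarrow> mset is \<in> idx_set d"
  by (simp add: idx_set_def index_lists_def)

lemma index_lists_fiber:
  "m \<in> idx_set d \<Longrightarrow> {is \<in> index_lists d. mset is = m} = permutations_of_multiset m"
  by (auto simp: idx_set_def index_lists_def permutations_of_multiset_def)

lemma sum_index_lists_group_mset:
  fixes f :: "'n::finite list \<Rightarrow> real"
  shows "sum f (index_lists d) = (\<Sum>m\<in>idx_set d. \<Sum>is\<in>permutations_of_multiset m. f is)"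
proof -
  have "sum f (index_lists d) = (\<Sum>m\<in>idx_set d. \<Sum>is\<in>{is \<in> index_lists d. mset is = m}. f is)"
    by (rule sum.group[symmetric])
       (auto simp: finite_index_lists finite_idx_set idx_set_eq_image_mset)
  then show ?thesis by (simp add: index_lists_fiber)
qed

lemma sum_index_lists_mset:
  fixes h :: "'n::finite multiset \<Rightarrow> real"
  shows "(\<Sum>is\<in>index_lists d. h (mset is)) = (\<Sum>m\<in>idx_set d. real (perm_count m) * h m)"
  unfolding sum_index_lists_group_mset
  by (intro sum.cong refl) (simp add: perm_count_eq_card permutations_of_multisetD)

lemma contract_entry_tensor:
  assumes "m \<in> idx_set d"
  shows "contract (entry_tensor m) w d [] =
           (\<Sum>is\<in>permutations_of_multiset m. prod_list (map (\<lambda>i. w $ i) is))"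
proof -
  have "contract (entry_tensor m) w d [] =
      (\<Sum>is\<in>index_lists d. if mset is = m then prod_list (map (\<lambda>i. w $ i) is) else 0)"
    by (auto simp: contract_eq_sum_index_lists entry_tensor_def intro!: sum.cong)
  also have "\<dots> = (\<Sum>is\<in>{is \<in> index_lists d. mset is = m}. prod_list (map (\<lambda>i. w $ i) is))"
    by (simp add: sum.inter_filter finite_index_lists)
  finally show ?thesis by (simp add: index_lists_fiber[OF assms])
qed

lemma contract_entry_tensor_eq_mset_monomial:
  assumes "m \<in> idx_set d"
  shows "contract (entry_tensor m) w d [] = real (perm_count m) * mset_monomial w m"
  unfolding contract_entry_tensor[OF assms] prod_list_eq_mset_monomial
  by (simp add: perm_count_eq_card permutations_of_multisetD)

lemma sum_mset_monomial_products:
  fixes w z :: "real^'n::finite"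
  shows "(\<Sum>is\<in>index_lists d. mset_monomial w (mset is) * mset_monomial z (mset is)) = (w \<bullet> z) ^ d"
proof -
  have "mset_monomial w (mset is) * mset_monomial z (mset is) = prod_list (map (\<lambda>i. w $ i * z $ i) is)"
    for "is"
    by (simp add: prod_list_map_mult prod_list_eq_mset_monomial)
  then show ?thesis by (simp add: sum_index_lists_prod_list inner_vec_def)
qed

lemma has_real_derivative_mset_monomial:
  fixes u c :: "real^'n::finite"
  assumes m: "m \<in> idx_set d"
  shows "((\<lambda>t. mset_monomial (u + t *\<^sub>R c) m) has_real_derivative
           real d * (c \<bullet> contract_vec (entry_tensor m) u (d - 1)) / real (perm_count m)) (at 0)"
proof -
  have "((\<lambda>t. contract (entry_tensor m) (u + t *\<^sub>R c) d []) has_real_derivative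
      contract (\<lambda>is. 0) (u + 0 *\<^sub>R c) d []
      + real d * (\<Sum>k\<in>UNIV. c $ k * contract (entry_tensor m) (u + 0 *\<^sub>R c) (d - 1) [k])) (at 0)"
    by (rule has_real_derivative_contract[where Yt = "\<lambda>t. entry_tensor m"])
       (auto simp: symmetric_entry_tensor intro!: derivative_eq_intros)
  from DERIV_cdivide[OF this, of "real (perm_count m)"] show ?thesis
    using perm_count_pos[of m]
    by (simp add: contract_entry_tensor_eq_mset_monomial[OF m] contract_zero inner_vec_def
        contract_vec_def)
qed

text \<open>The weights \<open>1 / perm_count m\<close> are the variances of the free entries.  The identity
  follows by differentiating \<open>sum_mset_monomial_products\<close> once in each argument.\<close>

lemma weighted_entry_gram:
  fixes u a b :: "real^'n::finite"
  assumes u: "u \<bullet> u = 1" and d: "d \<ge> 1"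
  defines "K m \<equiv> contract_vec (entry_tensor m) u (d - 1)"
  shows "(\<Sum>m\<in>idx_set d. (a \<bullet> K m) * (b \<bullet> K m) / real (perm_count m))
           = (a \<bullet> b + real (d - 1) * (a \<bullet> u) * (b \<bullet> u)) / real d"
proof -
  define \<delta> where "\<delta> c m = real d * (c \<bullet> K m) / real (perm_count m)" for c m
  have \<delta>: "((\<lambda>t. mset_monomial (u + t *\<^sub>R c) m) has_real_derivative \<delta> c m) (at 0)"
    if "m \<in> idx_set d" for c m
    unfolding \<delta>_def K_def by (rule has_real_derivative_mset_monomial[OF that])
  have first: "(\<Sum>is\<in>index_lists d. mset_monomial (u + s *\<^sub>R a) (mset is) * \<delta> b (mset is))
      = real d * ((u + s *\<^sub>R a) \<bullet> u) ^ (d - 1) * ((u + s *\<^sub>R a) \<bullet> b)" for s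
  proof -
    have "((\<lambda>t. \<Sum>is\<in>index_lists d. mset_monomial (u + s *\<^sub>R a) (mset is)
                                    * mset_monomial (u + t *\<^sub>R b) (mset is))
        has_real_derivative
          (\<Sum>is\<in>index_lists d. mset_monomial (u + s *\<^sub>R a) (mset is) * \<delta> b (mset is))) (at 0)"
      by (intro DERIV_sum DERIV_cmult \<delta> mset_in_idx_set)
    moreover have "((\<lambda>t. ((u + s *\<^sub>R a) \<bullet> (u + t *\<^sub>R b)) ^ d) has_real_derivative
        real d * ((u + s *\<^sub>R a) \<bullet> u) ^ (d - 1) * ((u + s *\<^sub>R a) \<bullet> b)) (at 0)"
      by (auto simp: inner_add_right intro!: derivative_eq_intros)
    ultimately show ?thesis
      unfolding sum_mset_monomial_products by (rule DERIV_unique)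
  qed
  have "((\<lambda>s. \<Sum>is\<in>index_lists d. mset_monomial (u + s *\<^sub>R a) (mset is) * \<delta> b (mset is))
      has_real_derivative (\<Sum>is\<in>index_lists d. \<delta> a (mset is) * \<delta> b (mset is))) (at 0)"
    by (intro DERIV_sum DERIV_cmult_right \<delta> mset_in_idx_set)
  moreover have "((\<lambda>s. real d * ((u + s *\<^sub>R a) \<bullet> u) ^ (d - 1) * ((u + s *\<^sub>R a) \<bullet> b))
      has_real_derivative real d * (a \<bullet> b + real (d - 1) * (a \<bullet> u) * (b \<bullet> u))) (at 0)"
    by (auto simp: inner_add_left u inner_commute[of u b] algebra_simps intro!: derivative_eq_intros)
  ultimately have "(\<Sum>is\<in>index_lists d. \<delta> a (mset is) * \<delta> b (mset is))
      = real d * (a \<bullet> b + real (d - 1) * (a \<bullet> u) * (b \<bullet> u))"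
    unfolding first by (rule DERIV_unique)
  moreover have "(\<Sum>is\<in>index_lists d. \<delta> a (mset is) * \<delta> b (mset is))
      = real d * (real d * (\<Sum>m\<in>idx_set d. (a \<bullet> K m) * (b \<bullet> K m) / real (perm_count m)))"
    unfolding sum_index_lists_mset[of "\<lambda>m. \<delta> a m * \<delta> b m"] sum_distrib_left
    using perm_count_pos by (intro sum.cong refl) (simp add: \<delta>_def)
  ultimately have "real d * (\<Sum>m\<in>idx_set d. (a \<bullet> K m) * (b \<bullet> K m) / real (perm_count m))
      = a \<bullet> b + real (d - 1) * (a \<bullet> u) * (b \<bullet> u)"
    using d by simp
  then show ?thesis
    using d by (simp add: field_simps)
qed

lemma weighted_entry_quadratic_form:
  fixes u :: "real^'n::finite" and R :: "real^'n^'n"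
  assumes u: "u \<bullet> u = 1" and d: "d \<ge> 1"
  defines "K m \<equiv> contract_vec (entry_tensor m) u (d - 1)"
  shows "(\<Sum>m\<in>idx_set d. (R *v K m) \<bullet> K m / real (perm_count m))
           = (trace R + real (d - 1) * (u \<bullet> (R *v u))) / real d"
proof -
  have "(R *v K m) \<bullet> K m = (\<Sum>j\<in>UNIV. (R $ j \<bullet> K m) * (axis j 1 \<bullet> K m))" for m
    unfolding inner_axis' by (simp add: inner_vec_def[of "R *v K m"] matrix_vector_mul_component)
  then have "(\<Sum>m\<in>idx_set d. (R *v K m) \<bullet> K m / real (perm_count m))
      = (\<Sum>j\<in>UNIV. \<Sum>m\<in>idx_set d. (R $ j \<bullet> K m) * (axis j 1 \<bullet> K m) / real (perm_count m))"
    by (subst sum.swap) (simp add: sum_divide_distrib)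
  also have "\<dots> = (\<Sum>j\<in>UNIV. (R $ j $ j + real (d - 1) * (R $ j \<bullet> u) * u $ j) / real d)"
    unfolding K_def weighted_entry_gram[OF u d] by (simp add: inner_axis inner_axis')
  also have "\<dots> = (trace R + real (d - 1) * (u \<bullet> (R *v u))) / real d"
    by (simp add: trace_def sum_divide_distrib[symmetric] sum.distrib sum_distrib_left
        inner_vec_def matrix_vector_mul_component mult_ac)
  finally show ?thesis .
qed

section \<open>Perturbation of an eigenpair\<close>

lemma is_eigenpairD:
  assumes "is_eigenpair d Y \<mu> w"
  shows "contract Y w (d - 1) [j] = \<mu> * w $ j" and "w \<bullet> w = 1"
proof -
  from assms have "contract_vec Y w (d - 1) $ j = (\<mu> *\<^sub>R w) $ j" "norm w = 1"
    by (simp_all add: is_eigenpair_def)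
  then show "contract Y w (d - 1) [j] = \<mu> * w $ j" "w \<bullet> w = 1"
    by (simp_all add: contract_vec_def norm_eq_1)
qed

lemma symmetric_tensor_spiked: "symmetric_tensor (spiked lam x g)"
  unfolding symmetric_tensor_def spiked_def tensor_pow_def tensor_of_def
  by (auto simp: prod_list_eq_mset_monomial)

lemma contract_mat_symmetric:
  "symmetric_tensor Y \<Longrightarrow> contract_mat Y u p $ i $ j = contract_mat Y u p $ j $ i"
  by (simp add: contract_mat_def contract_cong_mset[of Y "[i, j]" "[j, i]"] add_mset_commute)

lemma contract_mat_mult_vec:
  assumes "symmetric_tensor Y"
  shows "(contract_mat Y u p *v w) $ j = (\<Sum>k\<in>UNIV. w $ k * contract Y u p [k, j])"
  using contract_mat_symmetric[OF assms]
  by (simp add: matrix_vector_mult_def contract_mat_def mult.commute)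

lemma contract_mat_mult_self:
  "symmetric_tensor Y \<Longrightarrow> contract_mat Y u p *v u = contract_vec Y u (Suc p)"
  by (simp add: vec_eq_iff contract_mat_mult_vec contract_vec_def contract_Suc)

lemma has_real_derivative_spiked_entry:
  fixes x :: "real^'n::finite"
  shows "((\<lambda>t. spiked lam x (g(m := t)) is) has_real_derivative
           (1 / sqrt (real CARD('n))) * entry_tensor m is) (at t0)"
proof (cases "mset is = m")
  case True
  then have "(\<lambda>t. spiked lam x (g(m := t)) is) = (\<lambda>t. lam * tensor_pow x is + t / sqrt (real CARD('n)))"
    by (auto simp: spiked_def tensor_of_def)
  with True show ?thesis
    by (auto simp: entry_tensor_def sqrt_divide_self_eq divide_inverse intro!: derivative_eq_intros)
next
  case False
  then have "(\<lambda>t. spiked lam x (g(m := t)) is) = (\<lambda>t. spiked lam x g is)"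
    by (auto simp: spiked_def tensor_of_def)
  with False show ?thesis by (simp add: entry_tensor_def)
qed

lemma eigenpair_derivative_equation:
  fixes g :: "'n::finite multiset \<Rightarrow> real" and x :: "real^'n"
    and \<mu> :: "('n multiset \<Rightarrow> real) \<Rightarrow> real" and u :: "('n multiset \<Rightarrow> real) \<Rightarrow> real^'n"
  assumes eig: "\<And>t. is_eigenpair d (spiked lam x (g(m := t))) (\<mu> (g(m := t))) (u (g(m := t)))"
    and \<mu>': "((\<lambda>t. \<mu> (g(m := t))) has_real_derivative \<alpha>) (at (g m))"
    and u': "\<And>i. ((\<lambda>t. u (g(m := t)) $ i) has_real_derivative v $ i) (at (g m))"
  shows "(1 / sqrt (real CARD('n))) *\<^sub>R contract_vec (entry_tensor m) (u g) (d - 1)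
           + real (d - 1) *\<^sub>R (contract_mat (spiked lam x g) (u g) (d - 2) *v v)
         = \<alpha> *\<^sub>R u g + \<mu> g *\<^sub>R v"
    and "u g \<bullet> v = 0"
proof -
  let ?s = "1 / sqrt (real CARD('n))"
  have "?s * contract (entry_tensor m) (u g) (d - 1) [j]
        + real (d - 1) * (contract_mat (spiked lam x g) (u g) (d - 2) *v v) $ j
      = \<alpha> * u g $ j + \<mu> g * v $ j" for j
  proof -
    have "((\<lambda>t. contract (spiked lam x (g(m := t))) (u (g(m := t))) (d - 1) [j]) has_real_derivative
        contract (\<lambda>is. ?s * entry_tensor m is) (u g) (d - 1) [j]
        + real (d - 1) * (\<Sum>k\<in>UNIV. v $ k * contract (spiked lam x g) (u g) (d - 1 - 1) [k, j]))
        (at (g m))"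
      using has_real_derivative_contract[where Yt = "\<lambda>t. spiked lam x (g(m := t))"
          and p = "d - 1" and js = "[j]", OF has_real_derivative_spiked_entry u' symmetric_tensor_spiked]
      by simp
    moreover have "((\<lambda>t. contract (spiked lam x (g(m := t))) (u (g(m := t))) (d - 1) [j])
        has_real_derivative \<alpha> * u g $ j + v $ j * \<mu> g) (at (g m))"
      unfolding is_eigenpairD(1)[OF eig] using DERIV_mult[OF \<mu>' u'] by simp
    ultimately have "contract (\<lambda>is. ?s * entry_tensor m is) (u g) (d - 1) [j]
        + real (d - 1) * (\<Sum>k\<in>UNIV. v $ k * contract (spiked lam x g) (u g) (d - 1 - 1) [k, j])
        = \<alpha> * u g $ j + v $ j * \<mu> g"
      by (rule DERIV_unique)
    then show ?thesis
      unfolding contract_cmult contract_mat_mult_vec[OF symmetric_tensor_spiked] diff_diff_left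
      by (simp add: mult.commute numeral_2_eq_2)
  qed
  then show "?s *\<^sub>R contract_vec (entry_tensor m) (u g) (d - 1)
      + real (d - 1) *\<^sub>R (contract_mat (spiked lam x g) (u g) (d - 2) *v v) = \<alpha> *\<^sub>R u g + \<mu> g *\<^sub>R v"
    by (simp add: vec_eq_iff contract_vec_def)
  have "((\<lambda>t. u (g(m := t)) \<bullet> u (g(m := t))) has_real_derivative
      (\<Sum>i\<in>UNIV. v $ i * u (g(m := g m)) $ i + v $ i * u (g(m := g m)) $ i)) (at (g m))"
    unfolding inner_vec_def inner_real_def by (intro DERIV_sum DERIV_mult u')
  moreover have "(\<lambda>t. u (g(m := t)) \<bullet> u (g(m := t))) = (\<lambda>t. 1)"
    using is_eigenpairD(2)[OF eig] by simp
  ultimately have "(\<Sum>i\<in>UNIV. v $ i * u (g(m := g m)) $ i + v $ i * u (g(m := g m)) $ i) = 0"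
    using DERIV_const DERIV_unique by metis
  then show "u g \<bullet> v = 0"
    by (simp add: inner_vec_def mult.commute sum_distrib_left[symmetric])
qed

lemma matrix_vector_mult_shift:
  fixes A :: "real^'n::finite^'n"
  shows "(A - c *\<^sub>R mat 1) *v z = A *v z - c *\<^sub>R z"
  by (simp add: matrix_vector_mult_diff_rdistrib scaleR_matrix_vector_assoc[symmetric])

lemma invertible_shift:
  fixes A :: "real^'n::finite^'n"
  assumes "\<not> has_eigenvalue A c"
  shows "invertible (A - c *\<^sub>R mat 1)"
proof -
  have "(A - c *\<^sub>R mat 1) *v z = 0 \<Longrightarrow> z = 0" for z
    using assms unfolding has_eigenvalue_def matrix_vector_mult_shift by auto
  then show ?thesis
    using matrix_left_invertible_ker invertible_left_inverse by blast
qed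

lemma matrix_inv_mult_left: "invertible A \<Longrightarrow> matrix_inv A ** A = mat 1"
  unfolding matrix_inv_def invertible_def by (rule someI2_ex) auto

lemma matrix_inv_mult_cancel:
  fixes A :: "real^'n::finite^'n"
  shows "invertible A \<Longrightarrow> matrix_inv A *v (A *v z) = z"
  by (simp add: matrix_vector_mul_assoc matrix_inv_mult_left)

lemma matrix_inv_shift_mult_eigenvector:
  fixes A :: "real^'n::finite^'n"
  assumes Au: "A *v u = \<mu> *\<^sub>R u" and noneig: "\<not> has_eigenvalue A c"
  shows "matrix_inv (A - c *\<^sub>R mat 1) *v u = (1 / (\<mu> - c)) *\<^sub>R u"
proof (cases "u = 0")
  case False
  then have "\<mu> \<noteq> c" using Au noneig by (auto simp: has_eigenvalue_def)
  let ?B = "A - c *\<^sub>R mat 1"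
  have "u = matrix_inv ?B *v (?B *v u)"
    by (simp add: matrix_inv_mult_cancel invertible_shift[OF noneig])
  also have "\<dots> = (\<mu> - c) *\<^sub>R (matrix_inv ?B *v u)"
    unfolding matrix_vector_mult_shift Au by (simp add: algebra_simps matrix_vector_mult_scaleR)
  finally have "(1 / (\<mu> - c)) *\<^sub>R u = (1 / (\<mu> - c)) *\<^sub>R ((\<mu> - c) *\<^sub>R (matrix_inv ?B *v u))"
    by (rule arg_cong)
  then show ?thesis using \<open>\<mu> \<noteq> c\<close> by simp
qed simp

text \<open>Pairing the equation with \<open>u\<close> kills the \<open>A\<close>-term (\<open>A\<close> is symmetric and
  \<open>u \<bottom> v\<close>), which determines \<open>\<alpha>\<close>; the remainder is inverted on the shifted matrix.\<close>

lemma differentiated_eigen_equation_solution: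
  fixes A R :: "real^'n::finite^'n" and u v K :: "real^'n"
  assumes A_sym: "\<And>i j. A $ i $ j = A $ j $ i" and Au: "A *v u = \<mu> *\<^sub>R u" and u: "u \<bullet> u = 1"
    and k: "k \<noteq> 0" and noneig: "\<not> has_eigenvalue A (\<mu> / k)"
    and R: "R = matrix_inv (A - (\<mu> / k) *\<^sub>R mat 1)" and Ru: "R *v u = c *\<^sub>R u"
    and eq: "s *\<^sub>R K + k *\<^sub>R (A *v v) = \<alpha> *\<^sub>R u + \<mu> *\<^sub>R v" and orth: "u \<bullet> v = 0"
  shows "v \<bullet> K = (s / k) * (c * (u \<bullet> K)^2 - (R *v K) \<bullet> K)"
proof -
  let ?B = "A - (\<mu> / k) *\<^sub>R mat 1"
  have "u \<bullet> (A *v v) = (A *v u) \<bullet> v"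
    using dot_lmul_matrix[of u A v] A_sym
    by (simp add: vector_matrix_mult_def matrix_vector_mult_def vec_eq_iff mult.commute)
  then have "u \<bullet> (A *v v) = 0"
    using Au orth by simp
  then have \<alpha>: "\<alpha> = s * (u \<bullet> K)"
    using arg_cong[OF eq, of "\<lambda>z. u \<bullet> z"] u orth by (simp add: inner_add_right)
  have "?B *v v = (1 / k) *\<^sub>R (\<alpha> *\<^sub>R u - s *\<^sub>R K)"
    using eq k by (simp add: matrix_vector_mult_shift field_simps vec_eq_iff)
  then have "v = (1 / k) *\<^sub>R (\<alpha> *\<^sub>R (R *v u) - s *\<^sub>R (R *v K))"
    using matrix_inv_mult_cancel[OF invertible_shift[OF noneig], of v]
    by (simp add: R matrix_vector_mult_scaleR matrix_vector_mult_diff_distrib)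
  then have "v \<bullet> K = (1 / k) * (\<alpha> * c * (u \<bullet> K) - s * ((R *v K) \<bullet> K))"
    using Ru by (simp add: inner_diff_left)
  then show ?thesis
    using \<alpha> by (simp add: power2_eq_square algebra_simps)
qed

lemma differentiable_prod_list_map:
  fixes f :: "'i \<Rightarrow> real \<Rightarrow> real"
  assumes "\<And>i. f i differentiable (at t0 within S)"
  shows "(\<lambda>t. prod_list (map (\<lambda>i. f i t) is)) differentiable (at t0 within S)"
  by (induction "is") (auto intro!: differentiable_mult assms)

lemma sum_partial_prod_list_permutations:
  fixes u :: "('n::finite multiset \<Rightarrow> real) \<Rightarrow> real^'n"
  assumes m: "m \<in> idx_set d"
    and u': "\<And>i. ((\<lambda>t. u (g(m := t)) $ i) has_real_derivative v $ i) (at (g m))"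
  shows "(\<Sum>is\<in>permutations_of_multiset m. partial (\<lambda>h. prod_list (map (\<lambda>i. u h $ i) is)) m g)
           = real d * (v \<bullet> contract_vec (entry_tensor m) (u g) (d - 1))"
proof -
  have "((\<lambda>t. prod_list (map (\<lambda>i. u (g(m := t)) $ i) is)) has_real_derivative
      partial (\<lambda>h. prod_list (map (\<lambda>i. u h $ i) is)) m g) (at (g m))" for "is"
    unfolding partial_def DERIV_deriv_iff_real_differentiable
    using u' by (intro differentiable_prod_list_map) (auto simp: real_differentiable_def)
  then have "((\<lambda>t. contract (entry_tensor m) (u (g(m := t))) d []) has_real_derivative
      (\<Sum>is\<in>permutations_of_multiset m. partial (\<lambda>h. prod_list (map (\<lambda>i. u h $ i) is)) m g))
      (at (g m))"
    unfolding contract_entry_tensor[OF m] by (intro DERIV_sum)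
  moreover have "((\<lambda>t. contract (entry_tensor m) (u (g(m := t))) d []) has_real_derivative
      contract (\<lambda>is. 0) (u (g(m := g m))) d []
      + real d * (\<Sum>k\<in>UNIV. v $ k * contract (entry_tensor m) (u (g(m := g m))) (d - 1) [k]))
      (at (g m))"
    by (rule has_real_derivative_contract[where Yt = "\<lambda>t. entry_tensor m"])
       (auto simp: symmetric_entry_tensor u')
  ultimately have "(\<Sum>is\<in>permutations_of_multiset m. partial (\<lambda>h. prod_list (map (\<lambda>i. u h $ i) is)) m g)
      = contract (\<lambda>is. 0) (u (g(m := g m))) d []
      + real d * (\<Sum>k\<in>UNIV. v $ k * contract (entry_tensor m) (u (g(m := g m))) (d - 1) [k])"
    by (rule DERIV_unique)
  then show ?thesis
    by (simp add: contract_zero inner_vec_def contract_vec_def)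
qed

lemma sum_index_lists_partial_prod_list:
  fixes u :: "('n::finite multiset \<Rightarrow> real) \<Rightarrow> real^'n"
  assumes u': "\<And>m i. m \<in> idx_set d \<Longrightarrow> ((\<lambda>t. u (g(m := t)) $ i) has_real_derivative v m $ i) (at (g m))"
  shows "(\<Sum>is\<in>index_lists d. partial (\<lambda>h. prod_list (map (\<lambda>i. u h $ i) is)) (mset is) g
                                / real (perm_count (mset is)))
       = (\<Sum>m\<in>idx_set d. real d * (v m \<bullet> contract_vec (entry_tensor m) (u g) (d - 1)) / real (perm_count m))"
  unfolding sum_index_lists_group_mset
proof (intro sum.cong refl)
  fix m :: "'n multiset" assume m: "m \<in> idx_set d"
  show "(\<Sum>is\<in>permutations_of_multiset m. partial (\<lambda>h. prod_list (map (\<lambda>i. u h $ i) is)) (mset is) g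
                                          / real (perm_count (mset is)))
      = real d * (v m \<bullet> contract_vec (entry_tensor m) (u g) (d - 1)) / real (perm_count m)"
    using sum_partial_prod_list_permutations[OF m u'[OF m]]
    by (simp add: permutations_of_multisetD sum_divide_distrib[symmetric])
qed

lemma weighted_sum_entries_resolvent_trace:
  fixes u :: "real^'n::finite" and R :: "real^'n^'n" and v :: "'n multiset \<Rightarrow> real^'n"
    and d :: nat and c s :: real
  defines "K m \<equiv> contract_vec (entry_tensor m) u (d - 1)"
  assumes u: "u \<bullet> u = 1" and d: "d \<ge> 1" and Ru: "R *v u = c *\<^sub>R u"
    and vK: "\<And>m. m \<in> idx_set d \<Longrightarrow>
               v m \<bullet> K m = (s / real (d - 1)) * (c * (u \<bullet> K m)^2 - (R *v K m) \<bullet> K m)"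
  shows "(\<Sum>m\<in>idx_set d. real d * (v m \<bullet> K m) / real (perm_count m)) = s / real (d - 1) * (c - trace R)"
proof -
  have "(\<Sum>m\<in>idx_set d. real d * (v m \<bullet> K m) / real (perm_count m))
      = (\<Sum>m\<in>idx_set d. real d * (s / real (d - 1)) *
          (c * ((u \<bullet> K m) * (u \<bullet> K m) / real (perm_count m)) - (R *v K m) \<bullet> K m / real (perm_count m)))"
    by (intro sum.cong refl)
       (simp add: vK power2_eq_square diff_divide_distrib right_diff_distrib mult_ac)
  also have "\<dots> = real d * (s / real (d - 1)) *
      (c * (\<Sum>m\<in>idx_set d. (u \<bullet> K m) * (u \<bullet> K m) / real (perm_count m))
       - (\<Sum>m\<in>idx_set d. (R *v K m) \<bullet> K m / real (perm_count m)))"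
    by (simp add: sum_subtractf sum_distrib_left right_diff_distrib)
  also have "\<dots> = real d * (s / real (d - 1)) * (c - (trace R + real (d - 1) * c) / real d)"
    using weighted_entry_gram[OF u d, of u u] weighted_entry_quadratic_form[OF u d, of R] d
    by (simp add: K_def Ru u of_nat_diff)
  also have "\<dots> = s / real (d - 1) * (c - trace R)"
  proof -
    have "real d * (c - (trace R + real (d - 1) * c) / real d) = c - trace R"
      using d by (simp add: field_simps of_nat_diff)
    then show ?thesis
      by (metis mult.commute mult.left_commute)
  qed
  finally show ?thesis .
qed

lemma weighted_sum_partial_prod_list:
  fixes g :: "'n::finite multiset \<Rightarrow> real" and x :: "real^'n"
    and \<mu> :: "('n multiset \<Rightarrow> real) \<Rightarrow> real" and u :: "('n multiset \<Rightarrow> real) \<Rightarrow> real^'n"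
  assumes d: "d \<ge> 3"
    and eig: "\<And>m t. m \<in> idx_set d \<Longrightarrow>
                is_eigenpair d (spiked lam x (g(m := t))) (\<mu> (g(m := t))) (u (g(m := t)))"
    and \<mu>_diff: "\<And>m. m \<in> idx_set d \<Longrightarrow> (\<lambda>t. \<mu> (g(m := t))) differentiable (at (g m))"
    and u_diff: "\<And>m i. m \<in> idx_set d \<Longrightarrow> (\<lambda>t. u (g(m := t)) $ i) differentiable (at (g m))"
    and \<mu>0: "\<mu> g \<noteq> 0"
    and noneig: "\<not> has_eigenvalue (contract_mat (spiked lam x g) (u g) (d - 2)) (\<mu> g / real (d - 1))"
  shows "(\<Sum>is\<in>index_lists d. partial (\<lambda>h. prod_list (map (\<lambda>i. u h $ i) is)) (mset is) g
                                / real (perm_count (mset is)))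
     = (1 / sqrt (real CARD('n))) * (1 / real (d - 2) * (1 / \<mu> g)
        - trace (matrix_inv (contract_mat (spiked lam x g) (u g) (d - 2) - (\<mu> g / real (d - 1)) *\<^sub>R mat 1))
          / real (d - 1))"
proof -
  define A where "A = contract_mat (spiked lam x g) (u g) (d - 2)"
  define R where "R = matrix_inv (A - (\<mu> g / real (d - 1)) *\<^sub>R mat 1)"
  define c where "c = 1 / (\<mu> g - \<mu> g / real (d - 1))"
  define v where "v m = (\<chi> i. deriv (\<lambda>t. u (g(m := t)) $ i) (g m))" for m
  have "replicate_mset d undefined \<in> idx_set d"
    by (simp add: idx_set_def)
  from eig[OF this, of "g (replicate_mset d undefined)"]
  have eig0: "is_eigenpair d (spiked lam x g) (\<mu> g) (u g)"
    by simp
  have u: "u g \<bullet> u g = 1"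
    by (rule is_eigenpairD(2)[OF eig0])
  have A_sym: "A $ i $ j = A $ j $ i" for i j
    by (simp add: A_def contract_mat_symmetric symmetric_tensor_spiked)
  have "Suc (d - 2) = d - 1"
    using d by simp
  then have Au: "A *v u g = \<mu> g *\<^sub>R u g"
    using eig0 by (simp add: A_def contract_mat_mult_self symmetric_tensor_spiked is_eigenpair_def)
  have Ru: "R *v u g = c *\<^sub>R u g"
    unfolding R_def c_def using Au noneig[folded A_def] by (rule matrix_inv_shift_mult_eigenvector)
  have u': "((\<lambda>t. u (g(m := t)) $ i) has_real_derivative v m $ i) (at (g m))"
    if "m \<in> idx_set d" for m i
    unfolding v_def using u_diff[OF that] by (simp add: DERIV_deriv_iff_real_differentiable)
  have vK: "v m \<bullet> K m = (1 / sqrt (real CARD('n)) / real (d - 1)) * (c * (u g \<bullet> K m)^2 - (R *v K m) \<bullet> K m)"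
    if m: "m \<in> idx_set d" and "K m = contract_vec (entry_tensor m) (u g) (d - 1)" for m K
  proof -
    obtain \<alpha> where \<alpha>: "((\<lambda>t. \<mu> (g(m := t))) has_real_derivative \<alpha>) (at (g m))"
      using \<mu>_diff[OF m] real_differentiable_def by blast
    show ?thesis
      using d that eigenpair_derivative_equation[OF eig[OF m] \<alpha> u'[OF m]]
      by (intro differentiated_eigen_equation_solution[where k = "real (d - 1)" and \<alpha> = \<alpha>,
            OF A_sym Au u _ noneig[folded A_def] R_def Ru])
         (simp_all add: A_def)
  qed
  have c_div: "c / real (d - 1) = 1 / real (d - 2) * (1 / \<mu> g)"
  proof -
    have "\<mu> g - \<mu> g / real (d - 1) = real (d - 2) * \<mu> g / real (d - 1)"
      using d by (simp add: field_simps of_nat_diff)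
    then show ?thesis
      using d by (simp add: c_def)
  qed
  have "(\<Sum>is\<in>index_lists d. partial (\<lambda>h. prod_list (map (\<lambda>i. u h $ i) is)) (mset is) g
                               / real (perm_count (mset is)))
      = (\<Sum>m\<in>idx_set d. real d * (v m \<bullet> contract_vec (entry_tensor m) (u g) (d - 1)) / real (perm_count m))"
    by (rule sum_index_lists_partial_prod_list[OF u'])
  also have "\<dots> = 1 / sqrt (real CARD('n)) / real (d - 1) * (c - trace R)"
    using d by (intro weighted_sum_entries_resolvent_trace[OF u _ Ru] vK) simp_all
  also have "\<dots> = 1 / sqrt (real CARD('n)) * (1 / real (d - 2) * (1 / \<mu> g) - trace R / real (d - 1))"
    unfolding c_div[symmetric] by (simp add: diff_divide_distrib right_diff_distrib)
  finally show ?thesis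
    by (simp add: R_def A_def)
qed

section \<open>Gaussian integration by parts\<close>

lemma eigenvalue_expansion:
  fixes x w :: "real^'n::finite" and g :: "'n multiset \<Rightarrow> real"
  assumes eig: "is_eigenpair d (spiked lam x g) \<mu> w" and d: "d \<ge> 1"
  shows "\<mu> = lam * (x \<bullet> w) ^ d + (1 / sqrt (real CARD('n))) *
               (\<Sum>is\<in>index_lists d. g (mset is) * prod_list (map (\<lambda>i. w $ i) is))"
proof -
  have "\<mu> = (\<Sum>j\<in>UNIV. w $ j * (\<mu> * w $ j))"
    using is_eigenpairD(2)[OF eig] by (simp add: inner_vec_def mult_ac flip: sum_distrib_left)
  also have "\<dots> = (\<Sum>j\<in>UNIV. w $ j * contract (spiked lam x g) w (d - 1) [j])"
    by (simp only: is_eigenpairD(1)[OF eig])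
  also have "\<dots> = contract (spiked lam x g) w (Suc (d - 1)) []"
    by (simp only: contract_Suc)
  also have "\<dots> = (\<Sum>is\<in>index_lists d. lam * prod_list (map (\<lambda>i. x $ i * w $ i) is)
      + (1 / sqrt (real CARD('n))) * (g (mset is) * prod_list (map (\<lambda>i. w $ i) is)))"
    using d unfolding contract_eq_sum_index_lists
    by (intro sum.cong) (simp_all add: spiked_def tensor_pow_def tensor_of_def prod_list_map_mult algebra_simps)
  finally show ?thesis
    by (simp add: sum.distrib sum_index_lists_prod_list inner_vec_def flip: sum_distrib_left sum_divide_distrib)
qed

lemma integral_eigenvalue_by_parts:
  fixes M :: "('n::finite multiset \<Rightarrow> real) measure" and x :: "real^'n"
    and \<mu> :: "('n multiset \<Rightarrow> real) \<Rightarrow> real" and u :: "('n multiset \<Rightarrow> real) \<Rightarrow> real^'n"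
  assumes d: "d \<ge> 1"
    and eig: "\<forall>g\<in>space M. is_eigenpair d (spiked lam x g) (\<mu> g) (u g)"
    and int_ov: "integrable M (\<lambda>g. (x \<bullet> u g) ^ d)"
    and ibp: "\<forall>m\<in>idx_set d. \<forall>is. length is = d \<longrightarrow>
               (let F = (\<lambda>g. prod_list (map (\<lambda>i. u g $ i) is)) in
                  integrable M (\<lambda>g. g m * F g) \<and> integrable M (partial F m) \<and>
                  (\<integral>g. g m * F g \<partial>M) = (1 / real (perm_count m)) * (\<integral>g. partial F m g \<partial>M))"
  defines "T \<equiv> \<lambda>g. \<Sum>is\<in>index_lists d.
              partial (\<lambda>h. prod_list (map (\<lambda>i. u h $ i) is)) (mset is) g / real (perm_count (mset is))"
  shows "integrable M T"
    and "(\<integral>g. \<mu> g \<partial>M)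
           = lam * (\<integral>g. (x \<bullet> u g) ^ d \<partial>M) + (1 / sqrt (real CARD('n))) * (\<integral>g. T g \<partial>M)"
proof -
  define F where "F is = (\<lambda>h. prod_list (map (\<lambda>i. u h $ i) is))" for "is"
  have ibp': "integrable M (\<lambda>g. g (mset is) * F is g)" "integrable M (partial (F is) (mset is))"
    "(\<integral>g. g (mset is) * F is g \<partial>M) = (\<integral>g. partial (F is) (mset is) g \<partial>M) / real (perm_count (mset is))"
    if "is \<in> index_lists d" for "is"
    using ibp mset_in_idx_set[OF that] that by (auto simp: F_def index_lists_def Let_def)
  show intT: "integrable M T"
    unfolding T_def F_def[symmetric] using ibp' by auto
  have "(\<integral>g. \<mu> g \<partial>M) = (\<integral>g. lam * (x \<bullet> u g) ^ d
      + (1 / sqrt (real CARD('n))) * (\<Sum>is\<in>index_lists d. g (mset is) * F is g) \<partial>M)"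
    by (intro Bochner_Integration.integral_cong refl)
       (use eigenvalue_expansion[OF eig[rule_format] d] in \<open>simp add: F_def\<close>)
  also have "\<dots> = lam * (\<integral>g. (x \<bullet> u g) ^ d \<partial>M)
      + (1 / sqrt (real CARD('n))) * (\<Sum>is\<in>index_lists d. \<integral>g. g (mset is) * F is g \<partial>M)"
    using int_ov ibp' by (simp add: Bochner_Integration.integral_sum)
  also have "(\<Sum>is\<in>index_lists d. \<integral>g. g (mset is) * F is g \<partial>M) = (\<integral>g. T g \<partial>M)"
    unfolding T_def F_def[symmetric] using ibp' by (simp add: Bochner_Integration.integral_sum)
  finally show "(\<integral>g. \<mu> g \<partial>M)
      = lam * (\<integral>g. (x \<bullet> u g) ^ d \<partial>M) + (1 / sqrt (real CARD('n))) * (\<integral>g. T g \<partial>M)" .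
qed

lemma fun_upd_in_space_gote: "g \<in> space (gote d) \<Longrightarrow> m \<in> idx_set d \<Longrightarrow> g(m := t) \<in> space (gote d)"
  by (auto simp: gote_def space_PiM PiE_iff extensional_def)

lemma C1_at_differentiable: "C1_at S F g \<Longrightarrow> m \<in> S \<Longrightarrow> (\<lambda>t. F (g(m := t))) differentiable (at (g m))"
  unfolding C1_at_def by blast

lemma AE_weighted_sum_partial_prod_list:
  fixes x :: "real^'n::finite"
    and \<mu> :: "('n multiset \<Rightarrow> real) \<Rightarrow> real" and u :: "('n multiset \<Rightarrow> real) \<Rightarrow> real^'n"
  assumes d: "d \<ge> 3"
    and eig: "\<forall>g\<in>space (gote d). is_eigenpair d (spiked lam x g) (\<mu> g) (u g)"
    and C1: "AE g in gote d. C1_at (idx_set d) \<mu> g \<and> (\<forall>i. C1_at (idx_set d) (\<lambda>h. u h $ i) g)"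
    and nondeg: "AE g in gote d. \<mu> g \<noteq> 0 \<and>
                   \<not> has_eigenvalue (contract_mat (spiked lam x g) (u g) (d - 2)) (\<mu> g / real (d - 1))"
  shows "AE g in gote d.
           (\<Sum>is\<in>index_lists d. partial (\<lambda>h. prod_list (map (\<lambda>i. u h $ i) is)) (mset is) g
                                / real (perm_count (mset is)))
         = (1 / sqrt (real CARD('n))) * (1 / real (d - 2) * (1 / \<mu> g)
            - trace (matrix_inv (contract_mat (spiked lam x g) (u g) (d - 2) - (\<mu> g / real (d - 1)) *\<^sub>R mat 1))
              / real (d - 1))"
  using C1 nondeg AE_space
proof eventually_elim
  case (elim g)
  then have C1g: "C1_at (idx_set d) \<mu> g" "\<And>i. C1_at (idx_set d) (\<lambda>h. u h $ i) g"
    by simp_all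
  show ?case
  proof (rule weighted_sum_partial_prod_list[OF d])
    show "is_eigenpair d (spiked lam x (g(m := t))) (\<mu> (g(m := t))) (u (g(m := t)))"
      if "m \<in> idx_set d" for m t
      using eig fun_upd_in_space_gote[OF \<open>g \<in> space (gote d)\<close> that] by simp
    show "(\<lambda>t. \<mu> (g(m := t))) differentiable (at (g m))" if "m \<in> idx_set d" for m
      using C1_at_differentiable[OF C1g(1) that] .
    show "(\<lambda>t. u (g(m := t)) $ i) differentiable (at (g m))" if "m \<in> idx_set d" for m i
      using C1_at_differentiable[OF C1g(2) that] .
  qed (use elim in simp_all)
qed

theorem mainTheorem8:
  fixes d :: nat and lam :: real and x :: "real^'n::finite"
    and \<mu> :: "('n multiset \<Rightarrow> real) \<Rightarrow> real"
    and u :: "('n multiset \<Rightarrow> real) \<Rightarrow> real^'n"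
  defines "M \<equiv> gote d"
    and "Y \<equiv> spiked lam x"
    and "Rbar \<equiv> (\<lambda>g. matrix_inv (contract_mat (spiked lam x g) (u g) (d - 2) - (\<mu> g / real (d - 1)) *\<^sub>R mat 1))"
  assumes d3: "d \<ge> 3"
    and lam_pos: "lam > 0"
    and x_unit: "norm x = 1"
    and eig: "\<forall>g\<in>space M. is_eigenpair d (Y g) (\<mu> g) (u g)"
    and C1: "AE g in M. C1_at (idx_set d) \<mu> g \<and> (\<forall>i. C1_at (idx_set d) (\<lambda>h. u h $ i) g)"
    and nondeg: "AE g in M. \<mu> g \<noteq> 0 \<and>
                   \<not> has_eigenvalue (contract_mat (Y g) (u g) (d - 2)) (\<mu> g / real (d - 1))"
    and int_mu: "integrable M \<mu>"
    and int_ov: "integrable M (\<lambda>g. (x \<bullet> u g) ^ d)"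
    and int_inv: "integrable M (\<lambda>g. 1 / \<mu> g)"
    and int_tr: "integrable M (\<lambda>g. trace (Rbar g))"
    and ibp: "\<forall>m\<in>idx_set d. \<forall>is. length is = d \<longrightarrow>
               (let F = (\<lambda>g. prod_list (map (\<lambda>i. u g $ i) is)) in
                  integrable M (\<lambda>g. g m * F g) \<and> integrable M (partial F m) \<and>
                  (\<integral>g. g m * F g \<partial>M) = (1 / real (perm_count m)) * (\<integral>g. partial F m g \<partial>M))"
  shows "(\<integral>g. \<mu> g \<partial>M) =
           lam * (\<integral>g. (x \<bullet> u g) ^ d \<partial>M)
         + 1 / (real (d - 2) * real CARD('n)) * (\<integral>g. 1 / \<mu> g \<partial>M)
         - 1 / (real (d - 1) * real CARD('n)) * (\<integral>g. trace (Rbar g) \<partial>M)"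
proof -
  let ?s = "1 / sqrt (real CARD('n))"
  define T where "T g = (\<Sum>is\<in>index_lists d.
      partial (\<lambda>h. prod_list (map (\<lambda>i. u h $ i) is)) (mset is) g / real (perm_count (mset is)))" for g
  define G where "G g = ?s * (1 / real (d - 2) * (1 / \<mu> g) - trace (Rbar g) / real (d - 1))" for g
  have "d \<ge> 1" using d3 by simp
  note by_parts = integral_eigenvalue_by_parts[OF this eig[unfolded Y_def] int_ov ibp, folded T_def]
  have "AE g in M. T g = G g"
    using AE_weighted_sum_partial_prod_list[OF d3 eig[unfolded M_def Y_def] C1[unfolded M_def]
        nondeg[unfolded M_def Y_def]]
    unfolding M_def T_def G_def Rbar_def .
  have int_inv': "integrable M (\<lambda>g. 1 / real (d - 2) * (1 / \<mu> g))"
    by (intro integrable_mult_right int_inv)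
  have int_tr': "integrable M (\<lambda>g. trace (Rbar g) / real (d - 1))"
    by (intro integrable_divide_zero int_tr)
  have "integrable M G"
    unfolding G_def by (intro integrable_mult_right Bochner_Integration.integrable_diff int_inv' int_tr')
  with \<open>AE g in M. T g = G g\<close> have "(\<integral>g. T g \<partial>M) = (\<integral>g. G g \<partial>M)"
    using by_parts(1) by (intro integral_cong_AE) auto
  also have "\<dots> = ?s * (1 / real (d - 2) * (\<integral>g. 1 / \<mu> g \<partial>M)
                        - (\<integral>g. trace (Rbar g) \<partial>M) / real (d - 1))"
    unfolding G_def integral_mult_right_zero Bochner_Integration.integral_diff[OF int_inv' int_tr']
      integral_divide_zero ..
  finally have "?s * (\<integral>g. T g \<partial>M) = 1 / real CARD('n) *
      (1 / real (d - 2) * (\<integral>g. 1 / \<mu> g \<partial>M) - (\<integral>g. trace (Rbar g) \<partial>M) / real (d - 1))"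
    by (simp add: mult.assoc[symmetric])
  then show ?thesis
    unfolding by_parts(2) by (simp add: right_diff_distrib mult_ac)
qed

end
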